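(* In the sequential contribution game described in the context, let $U$ be an open set of parameter triples $(\gamma,\rho,B)$ with $\gamma>0$, $\rho>0$, $0<B<c_{\max}$, such that for every $(\gamma,\rho,B)\in U$ (with $P$ fixed) the inequalities \[ \rho > n\max_i\ell_i'(c_{\max}),\quad \gamma > \max_{k=2,\dots,n}\frac{\ell_k'(c_{\max})B-\rho/n}{c_{\min}/B},\quad P > \Bigl(\max_i\ell_i'(c_{\max})+\gamma\tfrac{c_{\max}}{B}+\tfrac{\rho}{n}\Bigr)(c_{\max}-c_{\min}) \] hold, so that the game has a unique SPNE outcome $c^*(\gamma,\rho,B)$. Define total equilibrium welfare $W(\gamma,\rho,B)=\sum_{i=1}^n R_i\bigl(c^*(\gamma,\rho,B);\gamma,\rho,B\bigr)$. Then on $U$, $W$ is differentiable and \[ \frac{\partial W}{\partial\gamma}>0,\qquad \frac{\partial W}{\partial\rho}>0,\qquad \frac{\partial W}{\partial B}<0, \] i.e. total welfare is increasing in the cooperation coefficient $\gamma$ and in the sharing rate $\rho$, and decreasing in the threshold $B$.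
   Context: Sequential contribution game (MAC-SPGG). There are $n\ge 2$ agents acting once each in the fixed order $1,2,\dots,n$. Agent $i$ observes the previous contributions $c_1,\dots,c_{i-1}$ (perfect information) and chooses a contribution (score) $c_i\in[c_{\min},c_{\max}]$, where $0<c_{\min}\le c_{\max}<\infty$. A task threshold $B>0$ is given. Convention: $c_0:=0$. Write $S_n=\sum_{j=1}^n c_j$. Each agent $i$ has a cost function $\ell_i:[c_{\min},c_{\max}]\to\mathbb{R}$ that is strictly convex, twice continuously differentiable, with $\ell_i'>0$. Parameters $\rho>0$ (task reward multiplier), $\gamma>0$ (cooperation coefficient), $P>0$ (failure penalty). The payoff of agent $i$ for the profile $c=(c_1,\dots,c_n)$, depending on parameters $(\gamma,\rho,B)$, is \[ R_i(c;\gamma,\rho,B)= -\ell_i(c_i)+\gamma\,\frac{c_{i-1}}{B}\,c_i+\frac{\rho}{n}\,S_n-P\cdot\mathbf{1}(c_n<B). \] SPNE denotes subgame perfect Nash equilibrium of this finite perfect-information game. *)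

theory Defs
  imports "HOL-Analysis.Analysis"
begin

definition strictly_convex_on :: "real set \<Rightarrow> (real \<Rightarrow> real) \<Rightarrow> bool" where
  "strictly_convex_on S f \<longleftrightarrow> convex S \<and>
     (\<forall>x\<in>S. \<forall>y\<in>S. \<forall>u. x \<noteq> y \<and> 0 < u \<and> u < 1 \<longrightarrow>
        f (u * x + (1 - u) * y) < u * f x + (1 - u) * f y)"

text \<open>Agents are indexed 1..n. A (partial) history / profile is a real list; entry
  c ! (i-1) is the contribution c_i of agent i.  A strategy profile assigns to agent i
  a function from histories (lists of length i-1) to contributions.\<close>
type_synonym strategy_profile = "nat \<Rightarrow> real list \<Rightarrow> real"

text \<open>c_{i-1}, with the convention c_0 = 0.\<close>
definition prevc :: "real list \<Rightarrow> nat \<Rightarrow> real" where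
  "prevc c i = (if i \<le> 1 then 0 else c ! (i - 2))"

definition payoff ::
  "nat \<Rightarrow> (nat \<Rightarrow> real \<Rightarrow> real) \<Rightarrow> real \<Rightarrow> real \<Rightarrow> real \<Rightarrow> real \<Rightarrow> nat \<Rightarrow> real list \<Rightarrow> real" where
  "payoff n l P \<gamma> \<rho> B i c =
     - l i (c ! (i - 1)) + \<gamma> * (prevc c i / B) * (c ! (i - 1))
     + \<rho> / real n * sum_list c - P * (if c ! (n - 1) < B then 1 else 0)"

fun play :: "nat \<Rightarrow> strategy_profile \<Rightarrow> real list \<Rightarrow> real list" where
  "play 0 \<sigma> h = h"
| "play (Suc k) \<sigma> h = play k \<sigma> (h @ [\<sigma> (Suc (length h)) h])"

definition outcome_from :: "nat \<Rightarrow> strategy_profile \<Rightarrow> real list \<Rightarrow> real list" where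
  "outcome_from n \<sigma> h = play (n - length h) \<sigma> h"

definition feasible_strategy :: "real \<Rightarrow> real \<Rightarrow> (real list \<Rightarrow> real) \<Rightarrow> bool" where
  "feasible_strategy cmin cmax \<tau> \<longleftrightarrow> (\<forall>h. \<tau> h \<in> {cmin..cmax})"

definition feasible_profile :: "nat \<Rightarrow> real \<Rightarrow> real \<Rightarrow> strategy_profile \<Rightarrow> bool" where
  "feasible_profile n cmin cmax \<sigma> \<longleftrightarrow> (\<forall>i\<in>{1..n}. feasible_strategy cmin cmax (\<sigma> i))"

definition is_SPNE ::
  "nat \<Rightarrow> real \<Rightarrow> real \<Rightarrow> (nat \<Rightarrow> real \<Rightarrow> real) \<Rightarrow> real \<Rightarrow> real \<Rightarrow> real \<Rightarrow> real \<Rightarrow> strategy_profile \<Rightarrow> bool" where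
  "is_SPNE n cmin cmax l P \<gamma> \<rho> B \<sigma> \<longleftrightarrow>
     feasible_profile n cmin cmax \<sigma> \<and>
     (\<forall>h. length h < n \<and> set h \<subseteq> {cmin..cmax} \<longrightarrow>
        (\<forall>j\<in>{length h + 1..n}. \<forall>\<tau>. feasible_strategy cmin cmax \<tau> \<longrightarrow>
           payoff n l P \<gamma> \<rho> B j (outcome_from n (\<sigma>(j := \<tau>)) h)
             \<le> payoff n l P \<gamma> \<rho> B j (outcome_from n \<sigma> h)))"

definition is_SPNE_outcome ::
  "nat \<Rightarrow> real \<Rightarrow> real \<Rightarrow> (nat \<Rightarrow> real \<Rightarrow> real) \<Rightarrow> real \<Rightarrow> real \<Rightarrow> real \<Rightarrow> real \<Rightarrow> real list \<Rightarrow> bool" where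
  "is_SPNE_outcome n cmin cmax l P \<gamma> \<rho> B c \<longleftrightarrow>
     (\<exists>\<sigma>. is_SPNE n cmin cmax l P \<gamma> \<rho> B \<sigma> \<and> c = outcome_from n \<sigma> [])"

definition spne_outcome ::
  "nat \<Rightarrow> real \<Rightarrow> real \<Rightarrow> (nat \<Rightarrow> real \<Rightarrow> real) \<Rightarrow> real \<Rightarrow> real \<Rightarrow> real \<Rightarrow> real \<Rightarrow> real list" where
  "spne_outcome n cmin cmax l P \<gamma> \<rho> B = (THE c. is_SPNE_outcome n cmin cmax l P \<gamma> \<rho> B c)"

definition welfare ::
  "nat \<Rightarrow> real \<Rightarrow> real \<Rightarrow> (nat \<Rightarrow> real \<Rightarrow> real) \<Rightarrow> real \<Rightarrow> real \<Rightarrow> real \<Rightarrow> real \<Rightarrow> real" where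
  "welfare n cmin cmax l P \<gamma> \<rho> B =
     (\<Sum>i = 1..n. payoff n l P \<gamma> \<rho> B i (spne_outcome n cmin cmax l P \<gamma> \<rho> B))"

end

theory Submission
  imports Defs
begin

text \<open>Since \<open>\<rho> / n\<close> exceeds every marginal cost \<open>ld j cmax\<close>, the tangent bound
  \<open>l j x - l j cmax \<ge> ld j cmax * (x - cmax)\<close> of the convex cost shows that, when all later
  agents contribute \<open>cmax\<close>, agent \<open>j\<close> strictly prefers \<open>cmax\<close> to any \<open>x < cmax\<close>: lowering
  the contribution loses more shared reward than it saves in cost, lowers the cooperation
  bonus and can only trigger the penalty. By backward induction every SPNE plays \<open>cmax\<close>
  after every feasible history, so on \<open>U\<close> the welfare equals
  \<open>- (\<Sum>i. l i cmax) + \<gamma> * (n - 1) * cmax\<^sup>2 / B + \<rho> * n * cmax\<close>, whose partial derivatives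
  have the claimed signs.\<close>

lemma strictly_convex_on_imp_convex_on:
  fixes f :: "real \<Rightarrow> real"
  assumes "strictly_convex_on S f"
  shows "convex_on S f"
proof (rule convex_onI)
  show "convex S" using assms by (simp add: strictly_convex_on_def)
  fix t x y :: real
  assume t: "0 < t" "t < 1" and xy: "x \<in> S" "y \<in> S"
  show "f ((1 - t) *\<^sub>R x + t *\<^sub>R y) \<le> (1 - t) * f x + t * f y"
  proof (cases "x = y")
    case False
    have "0 < 1 - t" "1 - t < 1" using t by auto
    with assms xy False have "f ((1 - t) * x + (1 - (1 - t)) * y) < (1 - t) * f x + (1 - (1 - t)) * f y"
      unfolding strictly_convex_on_def by blast
    then show ?thesis by simp
  qed (simp add: algebra_simps)
qed

lemma convex_on_above_tangent_at_right_end: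
  fixes f :: "real \<Rightarrow> real"
  assumes conv: "convex_on {a..b} f" and d: "(f has_real_derivative d) (at b within {a..b})"
    and x: "a \<le> x" "x < b"
  shows "d * (x - b) \<le> f x - f b"
proof -
  let ?A = "{x<..<b}"
  have nontriv: "at b within ?A \<noteq> bot"
    using x by (subst at_within_eq_bot_iff) auto
  have "?A \<subseteq> {a..b}" using x by auto
  with d have "((\<lambda>y. (f y - f b) / (y - b)) \<longlongrightarrow> d) (at b within ?A)"
    unfolding has_field_derivative_iff by (blast intro: tendsto_mono at_le)
  moreover have "\<forall>\<^sub>F y in at b within ?A. (f x - f b) / (x - b) \<le> (f y - f b) / (y - b)"
    unfolding eventually_at_filter
  proof (rule always_eventually, intro allI impI)
    fix y assume y: "y \<in> ?A"
    have "convex_on {x..b} f" using conv by (rule convex_on_subset) (use x in auto)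
    then have "f y \<le> (f x - f b) / (b - x) * (b - y) + f b"
      using convex_onD_Icc''[of x b f y] y by auto
    then have "f y - f b \<le> (f x - f b) * ((y - b) / (x - b))"
      using y x by (simp add: field_simps)
    then show "(f x - f b) / (x - b) \<le> (f y - f b) / (y - b)"
      using y x by (simp add: field_split_simps)
  qed
  ultimately have "(f x - f b) / (x - b) \<le> d"
    using nontriv by (rule tendsto_lowerbound)
  then show ?thesis using x by (simp add: field_simps)
qed

lemma less_divide_if_mult_Max_less:
  fixes f :: "'a \<Rightarrow> real"
  assumes "finite I" "i \<in> I" "0 < c" "c * Max (f ` I) < r"
  shows "f i < r / c"
proof -
  have "c * f i \<le> c * Max (f ` I)"
    using assms by (intro mult_left_mono Max_ge) auto
  then have "c * f i < r" using assms(4) by linarith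
  then show ?thesis using assms(3) by (simp add: pos_less_divide_eq mult.commute)
qed

lemma play_fun_upd_past: "j \<le> length h \<Longrightarrow> play m (\<sigma>(j := \<tau>)) h = play m \<sigma> h"
  by (induction m arbitrary: h) auto

lemma play_const: "play m (\<lambda>_ _. c) h = h @ replicate m c"
  by (induction m arbitrary: h) (auto simp: replicate_append_same)

lemma play_const_fun_upd:
  assumes "length h < j" "j \<le> length h + m"
  shows "play m ((\<lambda>_ _. c)(j := \<tau>)) h =
     h @ replicate (j - 1 - length h) c @ \<tau> (h @ replicate (j - 1 - length h) c)
       # replicate (length h + m - j) c"
  using assms
proof (induction m arbitrary: h)
  case (Suc m)
  show ?case
  proof (cases "j = Suc (length h)")
    case True
    then have "play (Suc m) ((\<lambda>_ _. c)(j := \<tau>)) h = play m ((\<lambda>_ _. c)(j := \<tau>)) (h @ [\<tau> h])"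
      by simp
    also have "\<dots> = play m (\<lambda>_ _. c) (h @ [\<tau> h])"
      using True by (intro play_fun_upd_past) simp
    finally show ?thesis using True by (simp add: play_const del: fun_upd_apply)
  next
    case False
    then have j: "length (h @ [c]) < j" "j \<le> length (h @ [c]) + m" using Suc.prems by auto
    have "replicate (j - 1 - length h) c = c # replicate (j - 1 - length (h @ [c])) c"
      using j by (simp add: replicate_Suc[symmetric] Suc_diff_Suc)
    moreover have "play (Suc m) ((\<lambda>_ _. c)(j := \<tau>)) h = play m ((\<lambda>_ _. c)(j := \<tau>)) (h @ [c])"
      using False by simp
    ultimately show ?thesis using Suc.IH[OF j] by (simp del: fun_upd_apply play.simps)
  qed
qed simp

lemma outcome_from_snoc:
  assumes "length h < n"
  shows "outcome_from n \<sigma> h = outcome_from n \<sigma> (h @ [\<sigma> (Suc (length h)) h])"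
proof -
  have "n - length h = Suc (n - length (h @ [\<sigma> (Suc (length h)) h]))"
    using assms by simp
  then show ?thesis unfolding outcome_from_def by simp
qed

lemma outcome_from_fun_upd_past:
  "j \<le> length h \<Longrightarrow> outcome_from n (\<sigma>(j := \<tau>)) h = outcome_from n \<sigma> h"
  unfolding outcome_from_def by (rule play_fun_upd_past)

lemma outcome_from_fun_upd_next:
  assumes "length h < n"
  shows "outcome_from n (\<sigma>(Suc (length h) := \<tau>)) h = outcome_from n \<sigma> (h @ [\<tau> h])"
  using outcome_from_snoc[OF assms, of "\<sigma>(Suc (length h) := \<tau>)"]
  by (simp add: outcome_from_fun_upd_past)

lemma payoff_followed_by_replicate:
  assumes j: "1 \<le> j" "j \<le> n" and len: "length h = j - 1"
  shows "payoff n l P \<gamma> \<rho> B j (h @ y # replicate (n - j) c) =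
     - l j y + \<gamma> * ((if j = 1 then 0 else h ! (j - 2)) / B) * y
     + \<rho> / real n * (sum_list h + y + real (n - j) * c)
     - P * (if (if j = n then y else c) < B then 1 else 0)"
proof -
  have own: "(h @ y # replicate (n - j) c) ! (j - 1) = y"
    using len by (simp add: nth_append)
  have prev: "prevc (h @ y # replicate (n - j) c) j = (if j = 1 then 0 else h ! (j - 2))"
    using j len by (auto simp: prevc_def nth_append)
  have last: "(h @ y # replicate (n - j) c) ! (n - 1) = (if j = n then y else c)"
    using j len by (auto simp: nth_append nth_Cons' Suc_diff_Suc)
  show ?thesis
    unfolding payoff_def own prev last by (simp add: sum_list_replicate)
qed

lemma sum_prevc_replicate: "(\<Sum>i = 1..n. prevc (replicate n c) i) = real (n - 1) * c"
proof (cases n)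
  case (Suc m)
  then have "(\<Sum>i = 1..n. prevc (replicate n c) i) = (\<Sum>i = Suc 1..n. prevc (replicate n c) i)"
    by (simp add: sum.atLeast_Suc_atMost prevc_def)
  also have "\<dots> = (\<Sum>i = Suc 1..n. c)"
    by (intro sum.cong) (auto simp: prevc_def)
  finally show ?thesis using Suc by simp
qed simp

lemma has_derivative_affine_ratio:
  fixes C K N \<gamma> \<rho> B :: real
  assumes "B \<noteq> 0"
  shows "((\<lambda>(\<gamma>, \<rho>, B). C + \<gamma> * K / B + \<rho> * N) has_derivative
      (\<lambda>(d\<gamma>, d\<rho>, dB). d\<gamma> * K / B - \<gamma> * K * dB / B\<^sup>2 + d\<rho> * N)) (at (\<gamma>, \<rho>, B))"
proof -
  have "((\<lambda>x. C + fst x * K / snd (snd x) + fst (snd x) * N) has_derivative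
      (\<lambda>h. fst h * K / B - \<gamma> * K * snd (snd h) / B\<^sup>2 + fst (snd h) * N)) (at (\<gamma>, \<rho>, B))"
    using assms
    by (auto intro!: derivative_eq_intros simp: field_simps power2_eq_square)
  then show ?thesis by (simp add: case_prod_beta')
qed

locale cmax_dominant =
  fixes n :: nat and cmin cmax :: real and l ld :: "nat \<Rightarrow> real \<Rightarrow> real"
    and P \<gamma> \<rho> B :: real
  assumes cmin_pos: "0 < cmin" and cmin_le_cmax: "cmin \<le> cmax"
    and B_pos: "0 < B" and B_less_cmax: "B < cmax"
    and \<gamma>_nonneg: "0 \<le> \<gamma>" and P_nonneg: "0 \<le> P"
    and convex_cost: "\<And>i. i \<in> {1..n} \<Longrightarrow> convex_on {cmin..cmax} (l i)"
    and cost_deriv: "\<And>i. i \<in> {1..n} \<Longrightarrow>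
          (l i has_real_derivative ld i cmax) (at cmax within {cmin..cmax})"
    and marginal_cost_less: "\<And>i. i \<in> {1..n} \<Longrightarrow> ld i cmax < \<rho> / real n"
begin

lemma payoff_cmax_greater:
  assumes j: "1 \<le> j" "j \<le> n" and h: "length h = j - 1" "set h \<subseteq> {cmin..cmax}"
    and x: "cmin \<le> x" "x < cmax"
  shows "payoff n l P \<gamma> \<rho> B j (h @ x # replicate (n - j) cmax)
       < payoff n l P \<gamma> \<rho> B j (h @ cmax # replicate (n - j) cmax)"
proof -
  define p where "p = (if j = 1 then 0 else h ! (j - 2))"
  have "0 \<le> p"
  proof (cases "j = 1")
    case False
    then have "h ! (j - 2) \<in> set h" using h j by simp
    then show ?thesis using h cmin_pos False unfolding p_def by auto
  qed (simp add: p_def)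
  then have bonus: "\<gamma> * (p / B) * x \<le> \<gamma> * (p / B) * cmax"
    using x \<gamma>_nonneg B_pos by (intro mult_left_mono) auto
  have "ld j cmax * (x - cmax) \<le> l j x - l j cmax"
    using j x convex_cost[of j] cost_deriv[of j]
    by (intro convex_on_above_tangent_at_right_end) auto
  moreover have "\<rho> / real n * (x - cmax) < ld j cmax * (x - cmax)"
    using j x marginal_cost_less by (intro mult_strict_right_mono_neg) auto
  moreover have "\<rho> / real n * (sum_list h + x + real (n - j) * cmax)
      - \<rho> / real n * (sum_list h + cmax + real (n - j) * cmax) = \<rho> / real n * (x - cmax)"
    by (subst right_diff_distrib[symmetric]) simp
  moreover have "0 \<le> P * (if (if j = n then x else cmax) < B then 1 else 0)"
    using P_nonneg by simp
  ultimately show ?thesis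
    unfolding payoff_followed_by_replicate[OF j h(1)] p_def[symmetric]
    using bonus B_less_cmax by simp
qed

lemma constant_cmax_is_SPNE: "is_SPNE n cmin cmax l P \<gamma> \<rho> B (\<lambda>_ _. cmax)"
  unfolding is_SPNE_def
proof (intro conjI allI impI ballI)
  show "feasible_profile n cmin cmax (\<lambda>_ _. cmax)"
    using cmin_le_cmax by (simp add: feasible_profile_def feasible_strategy_def)
  fix h j \<tau>
  assume h: "length h < n \<and> set h \<subseteq> {cmin..cmax}" and j: "j \<in> {length h + 1..n}"
    and \<tau>: "feasible_strategy cmin cmax \<tau>"
  define h' where "h' = h @ replicate (j - 1 - length h) cmax"
  have h': "length h' = j - 1" "set h' \<subseteq> {cmin..cmax}"
    using j h cmin_le_cmax by (auto simp: h'_def)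
  have deviate: "outcome_from n ((\<lambda>_ _. cmax)(j := \<tau>)) h = h' @ \<tau> h' # replicate (n - j) cmax"
    unfolding outcome_from_def h'_def using j h by (subst play_const_fun_upd) auto
  have "replicate (n - length h) cmax =
      replicate (j - 1 - length h) cmax @ replicate (Suc (n - j)) cmax"
    unfolding replicate_add[symmetric] using j by (intro arg_cong2[where f = replicate]) auto
  then have stay: "outcome_from n (\<lambda>_ _. cmax) h = h' @ cmax # replicate (n - j) cmax"
    unfolding outcome_from_def h'_def by (simp add: play_const)
  have "\<tau> h' \<in> {cmin..cmax}" using \<tau> by (simp add: feasible_strategy_def)
  then show "payoff n l P \<gamma> \<rho> B j (outcome_from n ((\<lambda>_ _. cmax)(j := \<tau>)) h)
      \<le> payoff n l P \<gamma> \<rho> B j (outcome_from n (\<lambda>_ _. cmax) h)"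
    unfolding deviate stay using payoff_cmax_greater[of j h' "\<tau> h'"] j h'
    by (cases "\<tau> h' = cmax") (auto intro: less_imp_le)
qed

lemma SPNE_outcome_from_eq_replicate_cmax:
  assumes \<sigma>: "is_SPNE n cmin cmax l P \<gamma> \<rho> B \<sigma>"
  shows "length h \<le> n \<Longrightarrow> set h \<subseteq> {cmin..cmax} \<Longrightarrow>
    outcome_from n \<sigma> h = h @ replicate (n - length h) cmax"
proof (induction "n - length h" arbitrary: h)
  case 0
  then show ?case by (simp add: outcome_from_def)
next
  case (Suc e)
  define j where "j = Suc (length h)"
  have j: "1 \<le> j" "j \<le> n" "length h = j - 1" using Suc.hyps(2) by (auto simp: j_def)
  have continue: "outcome_from n \<sigma> (h @ [z]) = h @ z # replicate (n - j) cmax"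
    if "z \<in> {cmin..cmax}" for z
    using Suc.hyps(1)[of "h @ [z]"] Suc.hyps(2) Suc.prems that by (simp add: j_def)
  define y where "y = \<sigma> j h"
  have y: "y \<in> {cmin..cmax}"
    using \<sigma> j unfolding is_SPNE_def feasible_profile_def feasible_strategy_def y_def by auto
  have "outcome_from n \<sigma> h = outcome_from n \<sigma> (h @ [y])"
    using j(2) unfolding y_def j_def by (intro outcome_from_snoc) simp
  also have "\<dots> = h @ y # replicate (n - j) cmax"
    by (rule continue[OF y])
  finally have stay: "outcome_from n \<sigma> h = h @ y # replicate (n - j) cmax" .
  have "outcome_from n (\<sigma>(j := \<lambda>_. cmax)) h = outcome_from n \<sigma> (h @ [cmax])"
    using j(2) unfolding j_def by (intro outcome_from_fun_upd_next) simp
  also have "\<dots> = h @ cmax # replicate (n - j) cmax"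
    using cmin_le_cmax by (intro continue) simp
  finally have deviate: "outcome_from n (\<sigma>(j := \<lambda>_. cmax)) h = h @ cmax # replicate (n - j) cmax" .
  have "payoff n l P \<gamma> \<rho> B j (outcome_from n (\<sigma>(j := \<lambda>_. cmax)) h)
      \<le> payoff n l P \<gamma> \<rho> B j (outcome_from n \<sigma> h)"
    using \<sigma> Suc.prems j cmin_le_cmax unfolding is_SPNE_def
    by (auto simp: feasible_strategy_def)
  then have "\<not> y < cmax"
    unfolding stay deviate using payoff_cmax_greater[OF j Suc.prems(2), of y] y by auto
  moreover have "n - length h = Suc (n - j)" using j by simp
  ultimately show ?case using stay y by simp
qed

lemma is_SPNE_outcome_iff: "is_SPNE_outcome n cmin cmax l P \<gamma> \<rho> B c \<longleftrightarrow> c = replicate n cmax"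
  using SPNE_outcome_from_eq_replicate_cmax[of _ "[]"] constant_cmax_is_SPNE
  unfolding is_SPNE_outcome_def by fastforce

lemma spne_outcome_eq: "spne_outcome n cmin cmax l P \<gamma> \<rho> B = replicate n cmax"
  unfolding spne_outcome_def is_SPNE_outcome_iff by simp

lemma welfare_eq:
  "welfare n cmin cmax l P \<gamma> \<rho> B =
     - (\<Sum>i = 1..n. l i cmax) + \<gamma> * (real (n - 1) * cmax\<^sup>2) / B + \<rho> * (real n * cmax)"
proof -
  have "payoff n l P \<gamma> \<rho> B i (replicate n cmax) =
      - l i cmax + \<gamma> * cmax / B * prevc (replicate n cmax) i + \<rho> * cmax"
    if "i \<in> {1..n}" for i
  proof -
    have "replicate n cmax ! (i - 1) = cmax" "replicate n cmax ! (n - 1) = cmax"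
      using that by auto
    then show ?thesis using that B_less_cmax by (simp add: payoff_def sum_list_replicate)
  qed
  then have "welfare n cmin cmax l P \<gamma> \<rho> B =
      (\<Sum>i = 1..n. - l i cmax + \<gamma> * cmax / B * prevc (replicate n cmax) i + \<rho> * cmax)"
    unfolding welfare_def spne_outcome_eq by (rule sum.cong[OF refl])
  also have "\<dots> = - (\<Sum>i = 1..n. l i cmax) + \<gamma> * cmax / B * (real (n - 1) * cmax) + real n * (\<rho> * cmax)"
    by (simp only: sum.distrib sum_negf sum_constant card_atLeastAtMost sum_prevc_replicate
        flip: sum_distrib_left) simp
  finally show ?thesis by (simp add: field_simps power2_eq_square)
qed

end

lemma cmax_dominantI:
  assumes "0 < cmin" "cmin \<le> cmax" "0 < B" "B < cmax" "0 \<le> \<gamma>" "0 \<le> P" "1 \<le> n"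
    and "\<forall>i\<in>{1..n}. strictly_convex_on {cmin..cmax} (l i)"
    and "\<forall>i\<in>{1..n}. (l i has_real_derivative ld i cmax) (at cmax within {cmin..cmax})"
    and max_less: "real n * Max ((\<lambda>i. ld i cmax) ` {1..n}) < \<rho>"
  shows "cmax_dominant n cmin cmax l ld P \<gamma> \<rho> B"
proof
  show "ld i cmax < \<rho> / real n" if "i \<in> {1..n}" for i
    using max_less that \<open>1 \<le> n\<close> by (intro less_divide_if_mult_Max_less[where f = "\<lambda>i. ld i cmax"]) auto
qed (use assms in \<open>auto intro: strictly_convex_on_imp_convex_on\<close>)

theorem theorem2:
  fixes n :: nat and cmin cmax P :: real
    and l ld :: "nat \<Rightarrow> real \<Rightarrow> real"
    and U :: "(real \<times> real \<times> real) set"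
  assumes n2: "n \<ge> 2"
    and cmin_pos: "0 < cmin" and cmin_le: "cmin \<le> cmax"
    and P_pos: "P > 0"
    and strict_conv: "\<forall>i\<in>{1..n}. strictly_convex_on {cmin..cmax} (l i)"
    and deriv: "\<forall>i\<in>{1..n}. \<forall>x\<in>{cmin..cmax}.
                  (l i has_real_derivative ld i x) (at x within {cmin..cmax})"
    and C2: "\<forall>i\<in>{1..n}. \<exists>ldd. continuous_on {cmin..cmax} ldd \<and>
                (\<forall>x\<in>{cmin..cmax}. (ld i has_real_derivative ldd x) (at x within {cmin..cmax}))"
    and deriv_pos: "\<forall>i\<in>{1..n}. \<forall>x\<in>{cmin..cmax}. ld i x > 0"
    and U_open: "open U"
    and U_cond: "\<forall>\<gamma> \<rho> B. (\<gamma>, \<rho>, B) \<in> U \<longrightarrow>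
        \<gamma> > 0 \<and> \<rho> > 0 \<and> 0 < B \<and> B < cmax \<and>
        \<rho> > real n * Max ((\<lambda>i. ld i cmax) ` {1..n}) \<and>
        \<gamma> > Max ((\<lambda>k. (ld k cmax * B - \<rho> / real n) / (cmin / B)) ` {2..n}) \<and>
        P > (Max ((\<lambda>i. ld i cmax) ` {1..n}) + \<gamma> * (cmax / B) + \<rho> / real n) * (cmax - cmin)"
  shows "(\<forall>\<gamma> \<rho> B. (\<gamma>, \<rho>, B) \<in> U \<longrightarrow>
            (\<exists>!c. is_SPNE_outcome n cmin cmax l P \<gamma> \<rho> B c)) \<and>
         (\<forall>x\<in>U. \<exists>D. ((\<lambda>(\<gamma>, \<rho>, B). welfare n cmin cmax l P \<gamma> \<rho> B) has_derivative D) (at x) \<and>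
            D (1, 0, 0) > 0 \<and> D (0, 1, 0) > 0 \<and> D (0, 0, 1) < 0)"
proof -
  have game: "cmax_dominant n cmin cmax l ld P \<gamma> \<rho> B" if "(\<gamma>, \<rho>, B) \<in> U" for \<gamma> \<rho> B
  proof -
    have "0 < \<gamma>" "0 < B" "B < cmax" "real n * Max ((\<lambda>i. ld i cmax) ` {1..n}) < \<rho>"
      using U_cond that by blast+
    then show ?thesis
      using cmin_pos cmin_le P_pos n2 strict_conv deriv by (intro cmax_dominantI) auto
  qed
  define C where "C = - (\<Sum>i = 1..n. l i cmax)"
  define K where "K = real (n - 1) * cmax\<^sup>2"
  define N where "N = real n * cmax"
  have welfare_on_U: "(\<lambda>(\<gamma>, \<rho>, B). welfare n cmin cmax l P \<gamma> \<rho> B) y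
      = (\<lambda>(\<gamma>, \<rho>, B). C + \<gamma> * K / B + \<rho> * N) y" if "y \<in> U" for y
  proof (cases y)
    case (fields \<gamma> \<rho> B)
    then show ?thesis
      using that cmax_dominant.welfare_eq[OF game, of \<gamma> \<rho> B] by (simp add: C_def K_def N_def)
  qed
  have "0 < K" "0 < N" using n2 cmin_pos cmin_le by (auto simp: K_def N_def)
  show ?thesis
  proof (intro conjI allI impI ballI)
    fix \<gamma> \<rho> B assume "(\<gamma>, \<rho>, B) \<in> U"
    then show "\<exists>!c. is_SPNE_outcome n cmin cmax l P \<gamma> \<rho> B c"
      using cmax_dominant.is_SPNE_outcome_iff[OF game] by auto
  next
    fix x assume "x \<in> U"
    then obtain \<gamma> \<rho> B where x: "x = (\<gamma>, \<rho>, B)" "(\<gamma>, \<rho>, B) \<in> U" by (cases x) auto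
    then have "0 < \<gamma>" "0 < B" using U_cond by auto
    let ?D = "\<lambda>(d\<gamma>, d\<rho>, dB). d\<gamma> * K / B - \<gamma> * K * dB / B\<^sup>2 + d\<rho> * N"
    have "((\<lambda>(\<gamma>, \<rho>, B). C + \<gamma> * K / B + \<rho> * N) has_derivative ?D) (at x)"
      using has_derivative_affine_ratio[of B C K N \<gamma> \<rho>] \<open>0 < B\<close> x(1) by simp
    then have "((\<lambda>(\<gamma>, \<rho>, B). welfare n cmin cmax l P \<gamma> \<rho> B) has_derivative ?D) (at x)"
      by (rule has_derivative_transform_within_open[OF _ U_open \<open>x \<in> U\<close>])
        (simp only: welfare_on_U)
    moreover have "?D (1, 0, 0) > 0" "?D (0, 1, 0) > 0" "?D (0, 0, 1) < 0"
      using \<open>0 < K\<close> \<open>0 < N\<close> \<open>0 < \<gamma>\<close> \<open>0 < B\<close> by simp_all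
    ultimately show "\<exists>D. ((\<lambda>(\<gamma>, \<rho>, B). welfare n cmin cmax l P \<gamma> \<rho> B) has_derivative D) (at x) \<and>
        D (1, 0, 0) > 0 \<and> D (0, 1, 0) > 0 \<and> D (0, 0, 1) < 0"
      by blast
  qed
qed

end
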